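(* For finite simple graphs $G$ and $H$ with disjoint vertex sets, $\mathrm{mur}(G)+\mathrm{mur}(H)\le\mathrm{mur}(G\cup H)$.
   Context: For a finite simple undirected graph $G$ on vertices $v_1,\dots,v_n$, let $A_G$ be its $(0,1)$-adjacency matrix, $D_G=\mathrm{diag}(d_1,\dots,d_n)$ with $d_i$ the degree of $v_i$, $I$ the $n\times n$ identity matrix and $J$ the $n\times n$ all-ones matrix. A universal adjacency matrix of $G$ is any matrix $\alpha A_G+\beta I+\gamma J+\delta D_G$ with real scalars $\alpha,\beta,\gamma,\delta$ and $\alpha\neq 0$. The minimum universal rank $\mathrm{mur}(G)$ is the minimum rank over all universal adjacency matrices of $G$. The union $G\cup H$ is the graph with vertex set $V(G)\cup V(H)$ and edge set $E(G)\cup E(H)$. *)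

theory Defs
  imports "Jordan_Normal_Form.DL_Rank"
begin

type_synonym 'a graph = "'a set \<times> ('a \<Rightarrow> 'a \<Rightarrow> bool)"

definition simple_graph :: "'a graph \<Rightarrow> bool" where
  "simple_graph G \<longleftrightarrow> finite (fst G) \<and>
     (\<forall>x y. snd G x y \<longrightarrow> x \<in> fst G \<and> y \<in> fst G \<and> x \<noteq> y \<and> snd G y x)"

definition graph_union :: "'a graph \<Rightarrow> 'a graph \<Rightarrow> 'a graph" where
  "graph_union G H = (fst G \<union> fst H, \<lambda>x y. snd G x y \<or> snd H x y)"

definition degree :: "'a graph \<Rightarrow> 'a \<Rightarrow> nat" where
  "degree G v = card {u \<in> fst G. snd G v u}"

text \<open>The universal adjacency matrix alpha A + beta I + gamma J + delta D as a function on vertices.\<close>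
definition univ_adj :: "'a graph \<Rightarrow> real \<Rightarrow> real \<Rightarrow> real \<Rightarrow> real \<Rightarrow> 'a \<Rightarrow> 'a \<Rightarrow> real" where
  "univ_adj G \<alpha> \<beta> \<gamma> \<delta> u v =
     \<alpha> * (if snd G u v then 1 else 0) + \<beta> * (if u = v then 1 else 0) + \<gamma>
     + \<delta> * (if u = v then real (degree G u) else 0)"

text \<open>A fixed enumeration v_1..v_n of a finite vertex set (the rank does not depend on it).\<close>
definition vertex_enum :: "'a set \<Rightarrow> nat \<Rightarrow> 'a" where
  "vertex_enum V = (SOME f. bij_betw f {..<card V} V)"

definition matrix_of :: "'a set \<Rightarrow> ('a \<Rightarrow> 'a \<Rightarrow> real) \<Rightarrow> real mat" where
  "matrix_of V M = mat (card V) (card V) (\<lambda>(i, j). M (vertex_enum V i) (vertex_enum V j))"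

definition rank_on :: "'a set \<Rightarrow> ('a \<Rightarrow> 'a \<Rightarrow> real) \<Rightarrow> nat" where
  "rank_on V M = vec_space.rank (card V) (matrix_of V M)"

definition mur :: "'a graph \<Rightarrow> nat" where
  "mur G = Min {rank_on (fst G) (univ_adj G \<alpha> \<beta> \<gamma> \<delta>) | \<alpha> \<beta> \<gamma> \<delta>. \<alpha> \<noteq> 0}"

end

theory Submission
  imports Defs "HOL-Library.Function_Algebras" "HOL-Library.Indicator_Function"
begin

text \<open>
  Let \<open>M\<close> be a universal adjacency matrix of \<open>G \<union> H\<close> of minimal rank. In block form
  \<open>M = [[A, \<gamma>J], [\<gamma>J, B]]\<close>, where \<open>A + cJ\<close> and \<open>B + cJ\<close> are universal adjacency matrices of
  \<open>G\<close> and \<open>H\<close> for every \<open>c\<close>, so their ranks are at least \<open>mur G\<close> and \<open>mur H\<close>. We compare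
  column spaces, viewing columns as real functions on the vertices. If the columns of \<open>A\<close>
  and of \<open>B\<close> lie in the column space of \<open>M\<close>, the two blocks contribute \<open>rank A + rank B\<close>.
  Otherwise, say a column of \<open>B\<close> is missing; then \<open>\<gamma> \<noteq> 0\<close> and the indicator of \<open>V(G)\<close> is
  not spanned by the \<open>G\<close>-columns of \<open>M\<close>. Replacing every \<open>H\<close>-column by its deviation from
  its value at a fixed vertex of \<open>H\<close> kills the \<open>G\<close>-columns and loses at most one dimension
  of \<open>B\<close>. On the \<open>G\<close> side the analogous map is either injective on the span of the
  \<open>G\<close>-columns, or it has a nonzero kernel vector there. That vector is a combination of the
  indicators of \<open>V(G)\<close> and \<open>V(H)\<close>, and a suitable shift \<open>c\<close> then makes \<open>rank (A + cJ)\<close>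
  smaller than the rank of the \<open>G\<close>-columns of \<open>M\<close>, which recovers the lost dimension.
\<close>

context vector_space
begin

lemma dim_mono_finite:
  assumes "finite W" and "V \<subseteq> span W"
  shows "dim V \<le> dim W"
proof -
  obtain B where B: "B \<subseteq> W" "independent B" "W \<subseteq> span B" "card B = dim W"
    by (rule basis_exists)
  have "V \<subseteq> span B"
    using assms(2) B(3) by (metis span_mono span_span subset_trans)
  then show ?thesis
    using dim_le_card B(1,4) assms(1) finite_subset by metis
qed

lemma dim_insert_le:
  assumes "finite S"
  shows "dim (insert x S) \<le> dim S + 1"
proof -
  obtain B where B: "B \<subseteq> S" "independent B" "S \<subseteq> span B" "card B = dim S"
    by (rule basis_exists)
  have "finite B"
    using B(1) assms finite_subset by blast
  have "insert x S \<subseteq> span (insert x B)"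
    using B(3) span_mono[of B "insert x B"] span_base[of x "insert x B"] by blast
  then have "dim (insert x S) \<le> card (insert x B)"
    using dim_le_card \<open>finite B\<close> by blast
  also have "\<dots> \<le> dim S + 1"
    using \<open>finite B\<close> B(4) by (simp add: card_insert_if)
  finally show ?thesis .
qed

lemma dim_image_le_finite:
  assumes "finite S" and "Vector_Spaces.linear (*s) (*s) f"
  shows "dim (f ` S) \<le> dim S"
proof -
  obtain B where B: "B \<subseteq> S" "independent B" "S \<subseteq> span B" "card B = dim S"
    by (rule basis_exists)
  have "finite B"
    using B(1) assms(1) finite_subset by blast
  have "f ` S \<subseteq> span (f ` B)"
    using B(3) module_hom.span_image[OF module_hom_linearI[OF assms(2)]]
    by (metis image_mono span_superset subset_trans)
  then have "dim (f ` S) \<le> card (f ` B)"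
    using dim_le_card \<open>finite B\<close> by blast
  also have "\<dots> \<le> dim S"
    using card_image_le \<open>finite B\<close> B(4) by metis
  finally show ?thesis .
qed

lemma dim_image_eq_finite:
  assumes "finite S" and "Vector_Spaces.linear (*s) (*s) f" and "inj_on f (span S)"
  shows "dim (f ` S) = dim S"
proof -
  obtain B where B: "B \<subseteq> S" "independent B" "S \<subseteq> span B" "card B = dim S"
    by (rule basis_exists)
  have hom: "module_hom scale scale f"
    using assms(2) by (rule module_hom_linearI)
  have span_B: "span B = span S"
    using B(1,3) by (metis span_mono span_span subset_antisym)
  have "independent (f ` B)"
    using module_hom.independent_injective_image[OF hom B(2)] assms(3) span_B by simp
  moreover have "span (f ` B) = span (f ` S)"
    using module_hom.span_image[OF hom] span_B by metis
  moreover have "card (f ` B) = card B"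
    using assms(3) B(1) by (meson card_image inj_on_subset span_superset subset_trans)
  ultimately show ?thesis
    using dim_eq_card B(4) by metis
qed

lemma independent_Un_of_image:
  assumes "independent A" and "finite B" and "Vector_Spaces.linear (*s) (*s) f"
    and "\<And>x. x \<in> A \<Longrightarrow> f x = 0" and "inj_on f B" and "independent (f ` B)"
  shows "independent (A \<union> B)"
  using assms(2,5,6)
proof (induction B)
  case empty
  show ?case
    using assms(1) by simp
next
  case (insert b C)
  have "f b \<notin> span (f ` C)"
  proof -
    have "f b \<notin> f ` C"
      using insert.hyps(2) insert.prems(1) by (simp add: inj_on_image_mem_iff)
    then show ?thesis
      using insert.prems(2) independent_insert by auto
  qed
  moreover have "f ` span (A \<union> C) \<subseteq> span (f ` C)"
  proof -
    have "f ` (A \<union> C) \<subseteq> insert 0 (f ` C)"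
      using assms(4) by auto
    then show ?thesis
      using module_hom.span_image[OF module_hom_linearI[OF assms(3)]]
      by (metis image_mono span_insert_0 span_mono)
  qed
  ultimately have "b \<notin> span (A \<union> C)"
    by blast
  moreover have "independent (A \<union> C)"
  proof -
    have "independent (f ` C)"
      using insert.prems(2) independent_mono[of "f ` insert b C" "f ` C"] by blast
    then show ?thesis
      using insert.IH insert.prems(1) by (simp add: inj_on_insert)
  qed
  ultimately show ?case
    using independent_insertI by simp
qed

lemma dim_add_dim_image_le:
  assumes "finite X" and "finite Y" and lin: "Vector_Spaces.linear (*s) (*s) f"
    and kernel: "\<And>x. x \<in> X \<Longrightarrow> f x = 0"
  shows "dim X + dim (f ` Y) \<le> dim (X \<union> Y)"
proof -
  obtain BX where BX: "BX \<subseteq> X" "independent BX" "X \<subseteq> span BX" "card BX = dim X"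
    by (rule basis_exists)
  obtain B' where B': "B' \<subseteq> f ` Y" "independent B'" "f ` Y \<subseteq> span B'" "card B' = dim (f ` Y)"
    by (rule basis_exists)
  obtain B where B: "B \<subseteq> Y" "inj_on f B" "f ` B = B'"
    using B'(1) subset_image_inj by metis
  have finite: "finite BX" "finite B"
    using BX(1) B(1) assms(1,2) finite_subset by blast+
  have "independent (BX \<union> B)"
    using independent_Un_of_image[OF BX(2) finite(2) lin _ B(2)] kernel BX(1) B'(2) B(3) by blast
  moreover have "BX \<inter> B = {}"
    using B'(2) B(3) BX(1) kernel dependent_zero by fastforce
  ultimately have "card BX + card B = dim (BX \<union> B)"
    using finite by (simp add: card_Un_disjoint dim_eq_card_independent)
  also have "\<dots> \<le> dim (X \<union> Y)"
    using BX(1) B(1) assms(1,2) by (intro dim_mono_finite) (auto intro: span_base)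
  finally show ?thesis
    using BX(4) B'(4) B(3) card_image[OF B(2)] by simp
qed

lemma dim_image_less:
  assumes "finite S" and "Vector_Spaces.linear (*s) (*s) f"
    and "w \<in> span S" and "w \<noteq> 0" and "f w = 0"
  shows "dim (f ` S) < dim S"
proof -
  have "dim {w} + dim (f ` S) \<le> dim ({w} \<union> S)"
    using dim_add_dim_image_le[of "{w}" S f] assms(1,2,5) by simp
  moreover have "dim ({w} \<union> S) = dim S"
    using span_eq_dim[OF span_redundant[OF assms(3)]] by simp
  moreover have "dim {w} = 1"
    using dim_eq_card_independent[of "{w}"] assms(4) by simp
  ultimately show ?thesis
    by simp
qed

end

instantiation "fun" :: (type, real_vector) real_vector
begin

definition scaleR_fun :: "real \<Rightarrow> ('a \<Rightarrow> 'b) \<Rightarrow> 'a \<Rightarrow> 'b" where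
  "scaleR_fun c x = (\<lambda>w. c *\<^sub>R x w)"

instance
  by standard (simp_all add: scaleR_fun_def fun_eq_iff scaleR_add_right scaleR_add_left)

end

lemma scaleR_fun_apply [simp]: "(c *\<^sub>R x) w = c *\<^sub>R x w"
  by (simp add: scaleR_fun_def)

lemma sum_fun_apply: "(sum F A) x = (\<Sum>i\<in>A. F i x)"
  by (induction A rule: infinite_finite_induct) auto

definition column :: "'a set \<Rightarrow> ('a \<Rightarrow> 'a \<Rightarrow> real) \<Rightarrow> 'a \<Rightarrow> 'a \<Rightarrow> real" where
  "column V M v = (\<lambda>w. if w \<in> V then M w v else 0)"

definition vec_to_fun :: "'a set \<Rightarrow> real vec \<Rightarrow> 'a \<Rightarrow> real" where
  "vec_to_fun V x = (\<lambda>w. if w \<in> V then x $ inv_into {..<card V} (vertex_enum V) w else 0)"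

lemma bij_betw_vertex_enum:
  assumes "finite V"
  shows "bij_betw (vertex_enum V) {..<card V} V"
proof -
  obtain h where "bij_betw h {0..<card V} V"
    using ex_bij_betw_nat_finite[OF assms] by blast
  then have "bij_betw h {..<card V} V"
    by (simp add: atLeast0LessThan)
  then show ?thesis
    unfolding vertex_enum_def by (rule someI[of "\<lambda>f. bij_betw f {..<card V} V"])
qed

lemma vec_to_fun_vertex_enum:
  assumes "finite V" and "i < card V"
  shows "vec_to_fun V x (vertex_enum V i) = x $ i"
  using bij_betw_vertex_enum[OF assms(1)] assms(2)
  by (auto simp: vec_to_fun_def bij_betw_def inv_into_f_f)

lemma vertex_enum_cases:
  assumes "finite V" and "w \<in> V"
  obtains i where "i < card V" and "w = vertex_enum V i"
  using bij_betw_vertex_enum[OF assms(1)] assms(2) by (force simp: bij_betw_def)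

lemma inj_on_vec_to_fun:
  assumes "finite V"
  shows "inj_on (vec_to_fun V) (carrier_vec (card V))"
proof (rule inj_onI)
  fix x y
  assume x: "x \<in> carrier_vec (card V)" and y: "y \<in> carrier_vec (card V)"
    and eq: "vec_to_fun V x = vec_to_fun V y"
  show "x = y"
  proof (rule eq_vecI)
    fix i assume "i < dim_vec y"
    then show "x $ i = y $ i"
      using y fun_cong[OF eq, of "vertex_enum V i"] vec_to_fun_vertex_enum[OF assms] by simp
  qed (use x y in simp)
qed

lemma vec_to_fun_zero:
  assumes "finite V"
  shows "vec_to_fun V (0\<^sub>v (card V)) = 0"
proof
  fix w
  show "vec_to_fun V (0\<^sub>v (card V)) w = 0 w"
  proof (cases "w \<in> V")
    case True
    then obtain i where "i < card V" "w = vertex_enum V i"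
      by (rule vertex_enum_cases[OF assms])
    then show ?thesis
      using vec_to_fun_vertex_enum[OF assms] by simp
  qed (simp add: vec_to_fun_def)
qed

lemma vec_to_fun_lincomb:
  assumes "finite V" and "A \<subseteq> carrier_vec (card V)"
  shows "vec_to_fun V (module.lincomb (module_vec TYPE(real) (card V)) c A)
    = (\<Sum>x\<in>A. c x *\<^sub>R vec_to_fun V x)"
proof
  interpret vec_space "TYPE(real)" "card V" .
  fix w
  show "vec_to_fun V (lincomb c A) w = (\<Sum>x\<in>A. c x *\<^sub>R vec_to_fun V x) w"
  proof (cases "w \<in> V")
    case True
    then obtain i where i: "i < card V" "w = vertex_enum V i"
      using vertex_enum_cases[OF assms(1)] by blast
    have "vec_to_fun V (lincomb c A) w = (\<Sum>x\<in>A. c x * x $ i)"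
      using i lincomb_index[OF i(1) assms(2)] vec_to_fun_vertex_enum[OF assms(1)] by simp
    also have "\<dots> = (\<Sum>x\<in>A. c x *\<^sub>R vec_to_fun V x) w"
      using i vec_to_fun_vertex_enum[OF assms(1)] by (simp add: sum_fun_apply)
    finally show ?thesis .
  qed (simp add: vec_to_fun_def sum_fun_apply)
qed

lemma lincomb_eq_0_iff_sum_vec_to_fun:
  assumes "finite V" and "A \<subseteq> carrier_vec (card V)"
  shows "module.lincomb (module_vec TYPE(real) (card V)) c A = 0\<^sub>v (card V)
    \<longleftrightarrow> (\<Sum>x\<in>A. c x *\<^sub>R vec_to_fun V x) = 0"
proof -
  interpret V: vec_space "TYPE(real)" "card V" .
  have "V.lincomb c A = 0\<^sub>v (card V) \<longleftrightarrow> vec_to_fun V (V.lincomb c A) = vec_to_fun V (0\<^sub>v (card V))"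
    using inj_on_eq_iff[OF inj_on_vec_to_fun[OF assms(1)]] V.lincomb_closed[OF assms(2)] by simp
  then show ?thesis
    using vec_to_fun_lincomb[OF assms] vec_to_fun_zero[OF assms(1)] by simp
qed

lemma lin_dep_iff_dependent_vec_to_fun:
  assumes "finite V" and "T \<subseteq> carrier_vec (card V)"
  shows "module.lin_dep class_ring (module_vec TYPE(real) (card V)) T
    \<longleftrightarrow> dependent (vec_to_fun V ` T)"
proof -
  interpret V: vec_space "TYPE(real)" "card V" .
  have inj: "inj_on (vec_to_fun V) T"
    using inj_on_subset[OF inj_on_vec_to_fun[OF assms(1)] assms(2)] .
  have lincomb_iff: "V.lincomb c A = 0\<^sub>v (card V) \<longleftrightarrow> (\<Sum>x\<in>A. c x *\<^sub>R vec_to_fun V x) = 0"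
    if "A \<subseteq> T" for A c
    using lincomb_eq_0_iff_sum_vec_to_fun[OF assms(1)] that assms(2) by blast
  show ?thesis
  proof
    assume "V.lin_dep T"
    then obtain A c v where A: "finite A" "A \<subseteq> T" "V.lincomb c A = 0\<^sub>v (card V)" "v \<in> A" "c v \<noteq> 0"
      unfolding V.lin_dep_def by auto
    have injA: "inj_on (vec_to_fun V) A"
      using inj A(2) inj_on_subset by blast
    define u where "u y = c (the_inv_into A (vec_to_fun V) y)" for y
    have "(\<Sum>y\<in>vec_to_fun V ` A. u y *\<^sub>R y) = (\<Sum>x\<in>A. c x *\<^sub>R vec_to_fun V x)"
      unfolding u_def sum.reindex[OF injA] using the_inv_into_f_f[OF injA] by simp
    also have "\<dots> = 0"
      using lincomb_iff A(2,3) by blast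
    finally show "dependent (vec_to_fun V ` T)"
      unfolding dependent_explicit using A the_inv_into_f_f[OF injA] u_def
      by (intro exI[of _ "vec_to_fun V ` A"] exI[of _ u]) auto
  next
    assume "dependent (vec_to_fun V ` T)"
    then obtain t u where t: "finite t" "t \<subseteq> vec_to_fun V ` T" "(\<Sum>y\<in>t. u y *\<^sub>R y) = 0"
      "\<exists>y\<in>t. u y \<noteq> 0"
      unfolding dependent_explicit by blast
    obtain A where A: "A \<subseteq> T" "t = vec_to_fun V ` A"
      using t(2) subset_imageE by metis
    have injA: "inj_on (vec_to_fun V) A"
      using inj A(1) inj_on_subset by blast
    have "(\<Sum>x\<in>A. (u \<circ> vec_to_fun V) x *\<^sub>R vec_to_fun V x) = 0"
      using t(3) unfolding A(2) sum.reindex[OF injA] by simp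
    then have "V.lincomb (u \<circ> vec_to_fun V) A = 0\<^sub>v (card V)"
      using lincomb_iff A(1) by blast
    moreover have "finite A"
      using t(1) A(2) injA finite_image_iff by blast
    moreover obtain y where "y \<in> A" "(u \<circ> vec_to_fun V) y \<noteq> 0"
      using t(4) A(2) by auto
    ultimately show "V.lin_dep T"
      unfolding V.lin_dep_def using A(1) by blast
  qed
qed

lemma vec_to_fun_col:
  assumes "finite V" and "j < card V"
  shows "vec_to_fun V (col (matrix_of V M) j) = column V M (vertex_enum V j)"
proof
  fix w
  show "vec_to_fun V (col (matrix_of V M) j) w = column V M (vertex_enum V j) w"
  proof (cases "w \<in> V")
    case True
    then obtain i where "i < card V" "w = vertex_enum V i"
      by (rule vertex_enum_cases[OF assms(1)])
    then show ?thesis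
      using True assms vec_to_fun_vertex_enum[OF assms(1)] by (simp add: matrix_of_def column_def)
  qed (simp add: vec_to_fun_def column_def)
qed

lemma vec_to_fun_cols:
  assumes "finite V"
  shows "vec_to_fun V ` set (cols (matrix_of V M)) = column V M ` V"
proof -
  have "set (cols (matrix_of V M)) = (\<lambda>j. col (matrix_of V M) j) ` {..<card V}"
    by (auto simp: cols_def matrix_of_def)
  then have "vec_to_fun V ` set (cols (matrix_of V M)) = column V M ` vertex_enum V ` {..<card V}"
    using vec_to_fun_col[OF assms] by (auto simp: image_image intro!: image_cong)
  then show ?thesis
    using bij_betw_vertex_enum[OF assms] by (simp add: bij_betw_def)
qed

lemma dim_vec_to_fun_maximal_indpt:
  assumes "finite V" and C: "C \<subseteq> carrier_vec (card V)"
    and S: "maximal S (\<lambda>T. T \<subseteq> C \<and> module.lin_indpt class_ring (module_vec TYPE(real) (card V)) T)"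
  shows "dim (vec_to_fun V ` C) = card S"
proof -
  interpret V: vec_space "TYPE(real)" "card V" .
  have S_C: "S \<subseteq> C" and "V.lin_indpt S"
    using S unfolding maximal_def by auto
  have inj: "inj_on (vec_to_fun V) C"
    using inj_on_subset[OF inj_on_vec_to_fun[OF assms(1)] C] .
  have indep: "independent (vec_to_fun V ` S)"
    using lin_dep_iff_dependent_vec_to_fun[OF assms(1)] \<open>V.lin_indpt S\<close> S_C C by blast
  have "vec_to_fun V ` C \<subseteq> span (vec_to_fun V ` S)"
  proof
    fix y assume "y \<in> vec_to_fun V ` C"
    then obtain x where x: "x \<in> C" "y = vec_to_fun V x"
      by blast
    show "y \<in> span (vec_to_fun V ` S)"
    proof (cases "x \<in> S")
      case False
      then have "V.lin_dep (insert x S)"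
        using S x(1) S_C unfolding maximal_def by blast
      then have "dependent (insert y (vec_to_fun V ` S))"
        using lin_dep_iff_dependent_vec_to_fun[OF assms(1), of "insert x S"] x S_C C by auto
      moreover have "y \<notin> vec_to_fun V ` S"
        using False x inj S_C by (auto simp: inj_on_image_mem_iff)
      ultimately show ?thesis
        using indep independent_insert[of y "vec_to_fun V ` S"] by auto
    qed (use x in \<open>simp add: span_base\<close>)
  qed
  then have "dim (vec_to_fun V ` C) = card (vec_to_fun V ` S)"
    by (rule basis_card_eq_dim[symmetric, OF image_mono[OF S_C] _ indep])
  also have "\<dots> = card S"
    using card_image[OF inj_on_subset[OF inj S_C]] .
  finally show ?thesis .
qed

lemma rank_on_eq_dim_columns:
  assumes "finite V"
  shows "rank_on V M = dim (column V M ` V)"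
proof -
  interpret V: vec_space "TYPE(real)" "card V" .
  define A where "A = matrix_of V M"
  have A: "A \<in> carrier_mat (card V) (card V)"
    unfolding A_def matrix_of_def by simp
  have "V.lin_indpt {}"
    by (simp add: V.lin_dep_def)
  then obtain S where S: "maximal S (\<lambda>T. T \<subseteq> set (cols A) \<and> V.lin_indpt T)"
    using maximal_exists_superset[of "set (cols A)" "\<lambda>T. T \<subseteq> set (cols A) \<and> V.lin_indpt T" "{}"]
    by blast
  have "rank_on V M = card S"
    unfolding rank_on_def A_def[symmetric] using V.rank_card_indpt[OF A S] .
  also have "\<dots> = dim (vec_to_fun V ` set (cols A))"
    using dim_vec_to_fun_maximal_indpt[OF assms _ S] cols_dim[of A] A by simp
  finally show ?thesis
    using vec_to_fun_cols[OF assms] A_def by simp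
qed

lemma rank_on_le_card:
  assumes "finite V"
  shows "rank_on V M \<le> card V"
proof -
  have "dim (column V M ` V) \<le> card (column V M ` V)"
    using assms by (intro dim_le_card') simp
  also have "\<dots> \<le> card V"
    by (rule card_image_le[OF assms])
  finally show ?thesis
    using rank_on_eq_dim_columns[OF assms] by simp
qed

lemma rank_on_cong:
  assumes "finite V" and "\<And>u v. u \<in> V \<Longrightarrow> v \<in> V \<Longrightarrow> M u v = M' u v"
  shows "rank_on V M = rank_on V M'"
proof -
  have "column V M ` V = column V M' ` V"
    using assms(2) by (auto simp: column_def fun_eq_iff intro!: image_cong)
  then show ?thesis
    using rank_on_eq_dim_columns[OF assms(1)] by simp
qed

lemma column_shift: "column V (\<lambda>u v. M u v + c) v = column V M v + c *\<^sub>R indicator V"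
  by (auto simp: column_def fun_eq_iff)

text \<open>
  \<open>shifted_cols V a V c\<close> are the columns of \<open>A + cJ\<close> when \<open>a v\<close> is the column \<open>v\<close> of \<open>A\<close>
  (a function vanishing outside \<open>V\<close>); \<open>shifted_cols VG a VH \<gamma>\<close> are the \<open>VG\<close>-columns of the
  block matrix \<open>[[A, \<gamma>J], [\<gamma>J, B]]\<close>.
\<close>

definition shifted_cols :: "'a set \<Rightarrow> ('a \<Rightarrow> 'a \<Rightarrow> real) \<Rightarrow> 'a set \<Rightarrow> real \<Rightarrow> ('a \<Rightarrow> real) set" where
  "shifted_cols V a W c = (\<lambda>v. a v + c *\<^sub>R indicator W) ` V"

definition deviation :: "'a set \<Rightarrow> 'a \<Rightarrow> ('a \<Rightarrow> real) \<Rightarrow> 'a \<Rightarrow> real" where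
  "deviation W p x = (\<lambda>w. if w \<in> W then x w - x p else 0)"

lemma finite_shifted_cols [simp]: "finite V \<Longrightarrow> finite (shifted_cols V a W c)"
  by (simp add: shifted_cols_def)

lemma linear_deviation: "linear (deviation W p)"
  by (rule linearI) (auto simp: deviation_def fun_eq_iff algebra_simps)

lemma linear_times_fun: "linear (\<lambda>x :: 'a \<Rightarrow> real. g * x)"
  by (rule linearI) (auto simp: fun_eq_iff algebra_simps)

locale column_blocks =
  fixes VG VH :: "'a set" and a b :: "'a \<Rightarrow> 'a \<Rightarrow> real"
  assumes finite_VG: "finite VG" and finite_VH: "finite VH" and disjoint: "VG \<inter> VH = {}"
    and a_supported: "\<And>v w. w \<notin> VG \<Longrightarrow> a v w = 0"
    and b_supported: "\<And>v w. w \<notin> VH \<Longrightarrow> b v w = 0"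

sublocale column_blocks \<subseteq> swapped: column_blocks VH VG b a
  using finite_VH finite_VG disjoint b_supported a_supported by unfold_locales auto

context column_blocks
begin

abbreviation block_cols :: "real \<Rightarrow> ('a \<Rightarrow> real) set" where
  "block_cols \<gamma> \<equiv> shifted_cols VG a VH \<gamma> \<union> shifted_cols VH b VG \<gamma>"

lemma a_vanishes_on_VH: "w \<in> VH \<Longrightarrow> a v w = 0"
  using a_supported disjoint by blast

lemma dim_shifted_cols_le: "dim (shifted_cols VG a VG 0) \<le> dim (shifted_cols VG a VH \<gamma>)"
proof -
  have "(\<lambda>x. indicator VG * x) ` shifted_cols VG a VH \<gamma> = shifted_cols VG a VG 0"
    unfolding shifted_cols_def using a_supported disjoint
    by (auto simp: image_image fun_eq_iff indicator_def intro!: image_cong)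
  then show ?thesis
    using dim_image_le_finite[OF _ linear_times_fun] finite_VG by (metis finite_shifted_cols)
qed

lemma deviation_shifted_cols:
  assumes "p \<in> VH" and "x \<in> shifted_cols VG a VH \<gamma>"
  shows "deviation VH p x = 0"
  using assms a_vanishes_on_VH by (auto simp: shifted_cols_def deviation_def fun_eq_iff)

lemma dim_shifted_cols_le_deviation:
  assumes "p \<in> VG"
  shows "dim (shifted_cols VG a VG 0) \<le> dim (deviation VG p ` shifted_cols VG a VH \<gamma>) + 1"
proof -
  let ?D = "deviation VG p ` shifted_cols VG a VH \<gamma>"
  have "shifted_cols VG a VG 0 \<subseteq> span (insert (indicator VG) ?D)"
  proof
    fix z assume "z \<in> shifted_cols VG a VG 0"
    then obtain v where v: "v \<in> VG" "z = a v"
      unfolding shifted_cols_def by auto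
    have "deviation VG p (a v + \<gamma> *\<^sub>R indicator VH) \<in> span (insert (indicator VG) ?D)"
      using v(1) unfolding shifted_cols_def by (intro span_base) blast
    moreover have "a v p *\<^sub>R indicator VG \<in> span (insert (indicator VG) ?D)"
      by (intro span_scale span_base) simp
    moreover have "deviation VG p (a v + \<gamma> *\<^sub>R indicator VH) + a v p *\<^sub>R indicator VG = z"
      using v assms disjoint a_supported by (auto simp: deviation_def fun_eq_iff indicator_def)
    ultimately show "z \<in> span (insert (indicator VG) ?D)"
      using span_add by metis
  qed
  then have "dim (shifted_cols VG a VG 0) \<le> dim (insert (indicator VG) ?D)"
    using finite_VG by (intro dim_mono_finite) auto
  also have "\<dots> \<le> dim ?D + 1"
    using finite_VG by (intro dim_insert_le) simp
  finally show ?thesis .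
qed

lemma indicator_not_in_span_shifted_cols:
  assumes "v0 \<in> VH" and "b v0 \<notin> span (block_cols \<gamma>)"
  shows "\<gamma> \<noteq> 0" and "indicator VG \<notin> span (shifted_cols VG a VH \<gamma>)"
proof -
  have "b v0 + \<gamma> *\<^sub>R indicator VG \<in> span (block_cols \<gamma>)"
    using assms(1) unfolding shifted_cols_def by (intro span_base) blast
  then have "\<gamma> *\<^sub>R indicator VG \<notin> span (block_cols \<gamma>)"
    using assms(2) span_diff by fastforce
  then show "\<gamma> \<noteq> 0" and "indicator VG \<notin> span (shifted_cols VG a VH \<gamma>)"
    using span_zero[of "block_cols \<gamma>"] span_scale[of "indicator VG" "shifted_cols VG a VH \<gamma>" \<gamma>]
      span_mono[OF Un_upper1, of "shifted_cols VG a VH \<gamma>" "shifted_cols VH b VG \<gamma>"]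
    by auto
qed

lemma deviation_kernel_in_span_shifted_cols:
  assumes "w \<in> span (shifted_cols VG a VH \<gamma>)" and "p \<in> VG" and "q \<in> VH"
    and "deviation VG p w = 0"
  shows "w = w p *\<^sub>R indicator VG + w q *\<^sub>R indicator VH"
proof
  let ?P = "{x :: 'a \<Rightarrow> real. \<forall>u. u \<notin> VG \<longrightarrow> x u = x q * indicator VH u}"
  have "span (shifted_cols VG a VH \<gamma>) \<subseteq> ?P"
  proof (rule span_minimal)
    show "shifted_cols VG a VH \<gamma> \<subseteq> ?P"
      using assms(3) a_supported a_vanishes_on_VH by (auto simp: shifted_cols_def)
    show "subspace ?P"
      by (auto simp: subspace_def algebra_simps)
  qed
  then have outside: "w u = w q * indicator VH u" if "u \<notin> VG" for u
    using assms(1) that by blast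
  fix u
  show "w u = (w p *\<^sub>R indicator VG + w q *\<^sub>R indicator VH) u"
    using outside[of u] fun_cong[OF assms(4), of u] disjoint
    by (cases "u \<in> VG") (auto simp: deviation_def indicator_def)
qed

lemma dim_shifted_cols_less:
  assumes "g0 \<in> VG" and "v0 \<in> VH" and "\<gamma> \<noteq> 0"
    and not_spanned: "indicator VG \<notin> span (shifted_cols VG a VH \<gamma>)"
    and "\<not> inj_on (deviation VG g0) (span (shifted_cols VG a VH \<gamma>))"
  obtains c where "dim (shifted_cols VG a VG c) < dim (shifted_cols VG a VH \<gamma>)"
proof -
  let ?S = "shifted_cols VG a VH \<gamma>"
  obtain w where w: "w \<in> span ?S" "w \<noteq> 0" "deviation VG g0 w = 0"
    using assms(5) unfolding linear_inj_on_iff_eq_0[OF linear_deviation subspace_span] by blast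
  have w_eq: "w = w g0 *\<^sub>R indicator VG + w v0 *\<^sub>R indicator VH"
    using deviation_kernel_in_span_shifted_cols[OF w(1) assms(1,2) w(3)] .
  have "w v0 \<noteq> 0"
  proof
    assume "w v0 = 0"
    then obtain k where w_k: "w = k *\<^sub>R indicator VG"
      using w_eq by auto
    then have "indicator VG = (1 / k) *\<^sub>R w"
      using w(2) by auto
    then have "indicator VG \<in> span ?S"
      using span_scale[OF w(1)] by metis
    with not_spanned show False ..
  qed
  \<comment> \<open>\<open>c\<close> is chosen so that \<open>L\<close> kills \<open>w\<close>, while \<open>L\<close> maps the \<open>VG\<close>-columns of the block
    matrix to the columns of \<open>A + cJ\<close>.\<close>
  define c where "c = - \<gamma> * w g0 / w v0"
  define L where "L x = indicator VG * x + (c / \<gamma> * x v0) *\<^sub>R indicator VG" for x :: "'a \<Rightarrow> real"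
  have lin_L: "linear L"
    by (rule linearI) (auto simp: L_def fun_eq_iff algebra_simps)
  have "L w = 0"
    using \<open>w v0 \<noteq> 0\<close> \<open>\<gamma> \<noteq> 0\<close> assms(2) disjoint
    by (subst w_eq) (auto simp: L_def c_def fun_eq_iff indicator_def)
  moreover have "L ` ?S = shifted_cols VG a VG c"
    unfolding shifted_cols_def using \<open>\<gamma> \<noteq> 0\<close> assms(2) a_supported a_vanishes_on_VH disjoint
    by (auto simp: L_def image_image fun_eq_iff indicator_def intro!: image_cong)
  ultimately have "dim (shifted_cols VG a VG c) < dim ?S"
    using dim_image_less[OF _ lin_L w(1,2)] finite_VG by simp
  then show ?thesis
    by (rule that)
qed

end

text \<open>Facts of the \<open>swapped\<close> instance become available only in a fresh context.\<close>

context column_blocks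
begin

lemma dim_block_cols_ge_if_not_spanned:
  assumes m: "\<And>c. m \<le> dim (shifted_cols VG a VG c)" and n: "\<And>c. n \<le> dim (shifted_cols VH b VH c)"
    and not_spanned: "\<not> b ` VH \<subseteq> span (block_cols \<gamma>)"
  shows "m + n \<le> dim (block_cols \<gamma>)"
proof -
  let ?SG = "shifted_cols VG a VH \<gamma>" and ?SH = "shifted_cols VH b VG \<gamma>"
  have fin: "finite ?SG" "finite ?SH"
    using finite_VG finite_VH by simp_all
  obtain v0 where v0: "v0 \<in> VH" "b v0 \<notin> span (block_cols \<gamma>)"
    using not_spanned by blast
  note \<gamma> = indicator_not_in_span_shifted_cols(1)[OF v0]
    and not_spanned_G = indicator_not_in_span_shifted_cols(2)[OF v0]
  have "indicator VG \<noteq> (0 :: 'a \<Rightarrow> real)"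
    using not_spanned_G span_zero[of ?SG] by auto
  then obtain g0 where g0: "g0 \<in> VG"
    by (auto simp: fun_eq_iff indicator_def)
  have dev_H: "dim ?SG + dim (deviation VH v0 ` ?SH) \<le> dim (block_cols \<gamma>)"
    using dim_add_dim_image_le[OF fin linear_deviation] deviation_shifted_cols[OF v0(1)] by blast
  have n_dev: "n \<le> dim (deviation VH v0 ` ?SH) + 1"
    using order_trans[OF n[of 0] swapped.dim_shifted_cols_le_deviation[OF v0(1)]] .
  show ?thesis
  proof (cases "inj_on (deviation VG g0) (span ?SG)")
    case True
    have "dim ?SH + dim (deviation VG g0 ` ?SG) \<le> dim (?SH \<union> ?SG)"
      using dim_add_dim_image_le[OF fin(2,1) linear_deviation] swapped.deviation_shifted_cols[OF g0]
      by blast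
    moreover have "dim (deviation VG g0 ` ?SG) = dim ?SG"
      using dim_image_eq_finite[OF fin(1) linear_deviation True] .
    moreover have "dim (?SH \<union> ?SG) = dim (block_cols \<gamma>)"
      by (simp add: Un_commute)
    ultimately show ?thesis
      using m[of 0] n[of 0] dim_shifted_cols_le[of \<gamma>] swapped.dim_shifted_cols_le[of \<gamma>]
      by linarith
  next
    case False
    then obtain c where "dim (shifted_cols VG a VG c) < dim ?SG"
      using dim_shifted_cols_less[OF g0 v0(1) \<gamma> not_spanned_G] by blast
    then show ?thesis
      using m[of c] dev_H n_dev by linarith
  qed
qed

lemma dim_block_cols_ge_if_spanned:
  assumes m: "\<And>c. m \<le> dim (shifted_cols VG a VG c)" and n: "\<And>c. n \<le> dim (shifted_cols VH b VH c)"
    and spanned: "a ` VG \<subseteq> span (block_cols \<gamma>)" "b ` VH \<subseteq> span (block_cols \<gamma>)"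
  shows "m + n \<le> dim (block_cols \<gamma>)"
proof -
  have "(\<lambda>x. indicator VG * x) ` a ` VG = a ` VG"
    using a_supported by (auto simp: image_image fun_eq_iff indicator_def intro!: image_cong)
  then have "dim (b ` VH) + dim (a ` VG) \<le> dim (b ` VH \<union> a ` VG)"
    using dim_add_dim_image_le[OF _ _ linear_times_fun, of "b ` VH" "a ` VG" "indicator VG"]
      finite_VG finite_VH swapped.a_vanishes_on_VH
    by (force simp: fun_eq_iff indicator_def)
  also have "\<dots> \<le> dim (block_cols \<gamma>)"
    using spanned finite_VG finite_VH by (intro dim_mono_finite) auto
  finally show ?thesis
    using m[of 0] n[of 0] by (simp add: shifted_cols_def)
qed

end

lemma rank_on_block_ge:
  fixes A B :: "'a \<Rightarrow> 'a \<Rightarrow> real"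
  assumes fin: "finite VG" "finite VH" and disjoint: "VG \<inter> VH = {}"
    and m: "\<And>c. m \<le> rank_on VG (\<lambda>u v. A u v + c)" and n: "\<And>c. n \<le> rank_on VH (\<lambda>u v. B u v + c)"
  shows "m + n \<le> rank_on (VG \<union> VH)
    (\<lambda>u v. if u \<in> VG \<and> v \<in> VG then A u v else if u \<in> VH \<and> v \<in> VH then B u v else \<gamma>)"
    (is "_ \<le> rank_on _ ?M")
proof -
  interpret column_blocks VG VH "column VG A" "column VH B"
    using assms by unfold_locales (auto simp: column_def)
  have m': "m \<le> dim (shifted_cols VG (column VG A) VG c)" for c
    using m[of c] unfolding rank_on_eq_dim_columns[OF fin(1)] shifted_cols_def column_shift .
  have n': "n \<le> dim (shifted_cols VH (column VH B) VH c)" for c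
    using n[of c] unfolding rank_on_eq_dim_columns[OF fin(2)] shifted_cols_def column_shift .
  have "column (VG \<union> VH) ?M ` (VG \<union> VH) = block_cols \<gamma>"
    unfolding shifted_cols_def image_Un using disjoint
    by (intro arg_cong2[where f = "(\<union>)"] image_cong) (auto simp: column_def fun_eq_iff indicator_def)
  then have rank_eq: "rank_on (VG \<union> VH) ?M = dim (block_cols \<gamma>)"
    using rank_on_eq_dim_columns[of "VG \<union> VH" ?M] fin by simp
  consider "column VG A ` VG \<subseteq> span (block_cols \<gamma>)" "column VH B ` VH \<subseteq> span (block_cols \<gamma>)"
    | "\<not> column VH B ` VH \<subseteq> span (block_cols \<gamma>)"
    | "\<not> column VG A ` VG \<subseteq> span (swapped.block_cols \<gamma>)"
    by (auto simp: Un_commute)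
  then show ?thesis
  proof cases
    case 1
    then show ?thesis
      unfolding rank_eq by (rule dim_block_cols_ge_if_spanned[OF m' n'])
  next
    case 2
    then show ?thesis
      unfolding rank_eq by (rule dim_block_cols_ge_if_not_spanned[OF m' n'])
  next
    case 3
    then have "n + m \<le> dim (swapped.block_cols \<gamma>)"
      by (rule swapped.dim_block_cols_ge_if_not_spanned[OF n' m'])
    then show ?thesis
      unfolding rank_eq by (simp add: Un_commute)
  qed
qed

lemma finite_univ_adj_ranks:
  assumes "simple_graph G"
  shows "finite {rank_on (fst G) (univ_adj G \<alpha> \<beta> \<gamma> \<delta>) | \<alpha> \<beta> \<gamma> \<delta>. \<alpha> \<noteq> 0}"
proof -
  have "finite (fst G)"
    using assms by (simp add: simple_graph_def)
  then show ?thesis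
    using rank_on_le_card by (auto intro: finite_subset[of _ "{..card (fst G)}"])
qed

lemma mur_le_rank_on:
  assumes "simple_graph G" and "\<alpha> \<noteq> 0"
  shows "mur G \<le> rank_on (fst G) (univ_adj G \<alpha> \<beta> \<gamma> \<delta>)"
  unfolding mur_def by (rule Min_le[OF finite_univ_adj_ranks[OF assms(1)]]) (use assms(2) in blast)

lemma mur_attained:
  assumes "simple_graph G"
  obtains \<alpha> \<beta> \<gamma> \<delta> where "\<alpha> \<noteq> 0" and "mur G = rank_on (fst G) (univ_adj G \<alpha> \<beta> \<gamma> \<delta>)"
proof -
  have "rank_on (fst G) (univ_adj G 1 0 0 0)
      \<in> {rank_on (fst G) (univ_adj G \<alpha> \<beta> \<gamma> \<delta>) | \<alpha> \<beta> \<gamma> \<delta>. \<alpha> \<noteq> 0}"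
    by force
  then have "mur G \<in> {rank_on (fst G) (univ_adj G \<alpha> \<beta> \<gamma> \<delta>) | \<alpha> \<beta> \<gamma> \<delta>. \<alpha> \<noteq> 0}"
    unfolding mur_def using Min_in[OF finite_univ_adj_ranks[OF assms]] by blast
  then show ?thesis
    using that by blast
qed

lemma univ_adj_shift: "univ_adj G \<alpha> \<beta> (\<gamma> + c) \<delta> u v = univ_adj G \<alpha> \<beta> \<gamma> \<delta> u v + c"
  by (simp add: univ_adj_def)

lemma univ_adj_graph_union:
  assumes "simple_graph G" and "simple_graph H" and "fst G \<inter> fst H = {}"
    and "u \<in> fst G \<union> fst H" and "v \<in> fst G \<union> fst H"
  shows "univ_adj (graph_union G H) \<alpha> \<beta> \<gamma> \<delta> u v =
    (if u \<in> fst G \<and> v \<in> fst G then univ_adj G \<alpha> \<beta> \<gamma> \<delta> u v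
     else if u \<in> fst H \<and> v \<in> fst H then univ_adj H \<alpha> \<beta> \<gamma> \<delta> u v else \<gamma>)"
proof -
  have EG: "snd G x y \<Longrightarrow> x \<in> fst G \<and> y \<in> fst G"
    and EH: "snd H x y \<Longrightarrow> x \<in> fst H \<and> y \<in> fst H" for x y
    using assms(1,2) by (auto simp: simple_graph_def)
  have "degree (graph_union G H) u = degree G u" if "u \<in> fst G"
    unfolding degree_def graph_union_def using that assms(3) EG EH
    by (auto intro!: arg_cong[where f = card])
  moreover have "degree (graph_union G H) u = degree H u" if "u \<in> fst H"
    unfolding degree_def graph_union_def using that assms(3) EG EH
    by (auto intro!: arg_cong[where f = card])
  ultimately show ?thesis
    using assms(3-5) EG EH by (auto simp: univ_adj_def graph_union_def)
qed

theorem lemma13: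
  fixes G H :: "'a graph"
  assumes "simple_graph G" and "simple_graph H"
    and "fst G \<inter> fst H = {}"
  shows "mur G + mur H \<le> mur (graph_union G H)"
proof -
  have fin: "finite (fst G)" "finite (fst H)"
    using assms(1,2) by (simp_all add: simple_graph_def)
  have "simple_graph (graph_union G H)"
    using assms(1,2) by (auto simp: simple_graph_def graph_union_def)
  then obtain \<alpha> \<beta> \<gamma> \<delta> where "\<alpha> \<noteq> 0"
    and mur_union: "mur (graph_union G H)
      = rank_on (fst G \<union> fst H) (univ_adj (graph_union G H) \<alpha> \<beta> \<gamma> \<delta>)"
    by (auto simp: graph_union_def elim: mur_attained)
  have "mur G + mur H \<le> rank_on (fst G \<union> fst H) (\<lambda>u v.
      if u \<in> fst G \<and> v \<in> fst G then univ_adj G \<alpha> \<beta> \<gamma> \<delta> u v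
      else if u \<in> fst H \<and> v \<in> fst H then univ_adj H \<alpha> \<beta> \<gamma> \<delta> u v else \<gamma>)"
    using fin assms(3) mur_le_rank_on[OF assms(1) \<open>\<alpha> \<noteq> 0\<close>] mur_le_rank_on[OF assms(2) \<open>\<alpha> \<noteq> 0\<close>]
    by (intro rank_on_block_ge) (simp_all add: univ_adj_shift[symmetric])
  also have "\<dots> = mur (graph_union G H)"
    unfolding mur_union using fin univ_adj_graph_union[OF assms] by (intro rank_on_cong) simp_all
  finally show ?thesis .
qed

end
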